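(* Let $\alpha\le1$ and $\theta=(\frac12,\alpha,\alpha)$. Let $\hat\mu\in\mathbb R_+^{|\mathcal N|\times|\mathcal I|}$ be an estimate of $(\mu_{ij})_{i\in\mathcal N,j\in\mathcal I}$, let $\hat P\in\arg\max_{P\in\mathcal P}W_\theta(\hat u(P))$ and $P^*\in\arg\max_{P\in\mathcal P}W_\theta(u(P))$, and let $$B(\hat\mu)=\max\Big(\max_{i\in[n]}\psi'(u_i(\hat P),\alpha),\ \max_{i\in[n]}\psi'(\hat u_i(P^* ),\alpha)\Big)$$ (with $B(\hat\mu)=+\infty$ if some argument is $0$ and $\alpha<1$). Then $$W_\theta(u(P^* ))-W_\theta(u(\hat P))\le 4B(\hat\mu)\sqrt{n\|v\|_2^2}\sqrt{\sum_{(i,j)\in\mathcal N\times\mathcal I}(\hat\mu_{ij}-\mu_{ij})^2}.$$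
   Context: Setup: users $\mathcal N=\{1,\dots,|\mathcal N|\}$, items $\mathcal I=\{|\mathcal N|+1,\dots,n\}$, $n=|\mathcal N|+|\mathcal I|$; exposure weights $v\in\mathbb R^{|\mathcal I|}$ with $v_1\ge\dots\ge v_{|\mathcal I|}\ge0$; values $\mu_{ij}\ge0$ for $i,j\in[n]$ ($\mu_{ij}$ for $i\in\mathcal N,j\in\mathcal I$ is the value of item $j$ to user $i$; $\mu_{ji}$ is the known value of user $i$ to item $j$, e.g. $\mu_{ji}=1$ in the exposure case). A ranking tensor is $P=(P_{ijk})_{i,j\in[n],k\in[|\mathcal I|]}$ with $P_{ijk}=0$ unless $i\in\mathcal N,j\in\mathcal I$, and each $P_i=(P_{ijk})_{j\in\mathcal I,k}$ doubly stochastic; $\mathcal P$ is the set of ranking tensors; $P_{ij}v=\sum_kP_{ijk}v_k$; true utilities $u_i(P)=\sum_{j=1}^n\mu_{ij}(P_{ij}+P_{ji})v$. Estimated utilities: $\hat u_i(P)=\sum_{j\in\mathcal I}\hat\mu_{ij}P_{ij}v$ for $i\in\mathcal N$ and $\hat u_j(P)=u_j(P)$ for $j\in\mathcal I$. Welfare: $\psi(x,\alpha)=x^\alpha$ ($\alpha>0$), $\log x$ ($\alpha=0$), $-x^\alpha$ ($\alpha<0$), with $\psi(0,\alpha)=-\infty$ for $\alpha\le0$; $\psi'(x,\alpha)$ is its derivative in $x$; $W_\theta(u)=(1-\lambda)\sum_{i\in\mathcal N}\psi(u_i,\alpha_1)+\lambda\sum_{j\in\mathcal I}\psi(u_j,\alpha_2)$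 for $\theta=(\lambda,\alpha_1,\alpha_2)$. *)

theory Defs
  imports Complex_Main "HOL-Library.Extended_Real"
begin

(* m = |N| users {1..m}; q = |I| items {m+1..m+q}; n = m + q agents *)

definition users :: "nat \<Rightarrow> nat set" where
  "users m = {1..m}"

definition items :: "nat \<Rightarrow> nat \<Rightarrow> nat set" where
  "items m q = {m+1..m+q}"

definition ranking_tensors :: "nat \<Rightarrow> nat \<Rightarrow> (nat \<Rightarrow> nat \<Rightarrow> nat \<Rightarrow> real) set" where
  "ranking_tensors m q = {P.
     (\<forall>i\<in>{1..m+q}. \<forall>j\<in>{1..m+q}. \<forall>k\<in>{1..q}.
        (\<not> (i \<in> users m \<and> j \<in> items m q) \<longrightarrow> P i j k = 0)) \<and>
     (\<forall>i\<in>users m.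
        (\<forall>j\<in>items m q. \<forall>k\<in>{1..q}. 0 \<le> P i j k) \<and>
        (\<forall>j\<in>items m q. (\<Sum>k=1..q. P i j k) = 1) \<and>
        (\<forall>k\<in>{1..q}. (\<Sum>j\<in>items m q. P i j k) = 1))}"

definition Pv :: "nat \<Rightarrow> (nat \<Rightarrow> real) \<Rightarrow> (nat \<Rightarrow> nat \<Rightarrow> nat \<Rightarrow> real) \<Rightarrow> nat \<Rightarrow> nat \<Rightarrow> real" where
  "Pv q v P i j = (\<Sum>k=1..q. P i j k * v k)"

definition util :: "nat \<Rightarrow> nat \<Rightarrow> (nat \<Rightarrow> nat \<Rightarrow> real) \<Rightarrow> (nat \<Rightarrow> real)
    \<Rightarrow> (nat \<Rightarrow> nat \<Rightarrow> nat \<Rightarrow> real) \<Rightarrow> nat \<Rightarrow> real" where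
  "util m q mu v P i = (\<Sum>j=1..m+q. mu i j * (Pv q v P i j + Pv q v P j i))"

definition util_hat :: "nat \<Rightarrow> nat \<Rightarrow> (nat \<Rightarrow> nat \<Rightarrow> real) \<Rightarrow> (nat \<Rightarrow> nat \<Rightarrow> real)
    \<Rightarrow> (nat \<Rightarrow> real) \<Rightarrow> (nat \<Rightarrow> nat \<Rightarrow> nat \<Rightarrow> real) \<Rightarrow> nat \<Rightarrow> real" where
  "util_hat m q muhat mu v P i =
     (if i \<in> users m then (\<Sum>j\<in>items m q. muhat i j * Pv q v P i j)
      else util m q mu v P i)"

definition psi :: "real \<Rightarrow> real \<Rightarrow> ereal" where
  "psi x \<alpha> = (if \<alpha> > 0 then ereal (x powr \<alpha>)
               else if x = 0 then -\<infinity>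
               else if \<alpha> = 0 then ereal (ln x)
               else ereal (- (x powr \<alpha>)))"

definition psi' :: "real \<Rightarrow> real \<Rightarrow> ereal" where
  "psi' x \<alpha> = (if \<alpha> = 1 then ereal 1
                else if x = 0 \<and> \<alpha> < 1 then \<infinity>
                else if \<alpha> > 0 then ereal (\<alpha> * x powr (\<alpha> - 1))
                else if \<alpha> = 0 then ereal (1 / x)
                else ereal (- \<alpha> * x powr (\<alpha> - 1)))"

(* W_theta(u), theta = (lambda, alpha1, alpha2) *)
definition welfare :: "nat \<Rightarrow> nat \<Rightarrow> real \<Rightarrow> real \<Rightarrow> real \<Rightarrow> (nat \<Rightarrow> real) \<Rightarrow> ereal" where
  "welfare m q lam \<alpha>1 \<alpha>2 u =
     ereal (1 - lam) * (\<Sum>i\<in>users m. psi (u i) \<alpha>1)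
     + ereal lam * (\<Sum>j\<in>items m q. psi (u j) \<alpha>2)"

end

theory Submission
  imports Defs "HOL-Analysis.Convex" "HOL-Analysis.L2_Norm"
begin

(* For alpha <= 1 the function psi(., alpha) is concave, so a welfare value lies below the tangent
   at any other utility vector y, whose slopes psi'(y_i) are bounded by B. True and estimated
   utilities of a ranking agree on the items and, by Cauchy-Schwarz and double stochasticity, differ
   on the users by at most sqrt(m |v|^2) |muhat - mu| in l1-norm. Chaining
   W(u(Pstar)) <= W(uhat(Pstar)) + ... <= W(uhat(Phat)) + ... <= W(u(Phat)) + ...
   through the optimality of Phat for the estimated welfare yields the bound even with constant 1
   instead of 4. *)

lemma powr_le_tangent:
  fixes a x y :: real
  assumes "0 < a" "a \<le> 1" "0 \<le> x" "0 < y"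
  shows "x powr a \<le> y powr a + a * y powr (a - 1) * (x - y)"
proof (cases "x = 0")
  case True
  have "y powr (a - 1) * y = y powr a"
    using assms by (simp add: powr_diff)
  with True assms show ?thesis
    by (simp add: algebra_simps)
next
  case False
  have "(x/y) powr a * 1 powr (1 - a) \<le> a * (x/y) + (1 - a) * 1"
    using False assms by (intro Youngs_inequality_0) auto
  then have "(x/y) powr a * y powr a \<le> (a * (x/y) + (1 - a)) * y powr a"
    by (intro mult_right_mono) auto
  then show ?thesis
    using assms by (simp add: powr_divide powr_diff field_simps)
qed

lemma ln_le_tangent:
  fixes x y :: real
  assumes "0 < x" "0 < y"
  shows "ln x \<le> ln y + (x - y) / y"
  using ln_le_minus_one[of "x/y"] assms by (simp add: ln_div diff_divide_distrib)

lemma powr_ge_tangent: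
  fixes a x y :: real
  assumes "a < 0" "0 < x" "0 < y"
  shows "y powr a + a * y powr (a - 1) * (x - y) \<le> x powr a"
proof -
  have "1 + a * (x/y - 1) \<le> 1 + a * ln (x/y)"
    using assms ln_le_minus_one[of "x/y"] by (simp add: mult_left_mono_neg)
  also have "\<dots> \<le> (x/y) powr a"
    using assms exp_ge_add_one_self[of "a * ln (x/y)"] by (simp add: powr_def)
  finally have "(1 + a * (x/y - 1)) * y powr a \<le> (x/y) powr a * y powr a"
    by (intro mult_right_mono) auto
  then show ?thesis
    using assms by (simp add: powr_divide powr_diff field_simps)
qed

lemma psi'_nonneg: "0 \<le> y \<Longrightarrow> 0 \<le> psi' y \<alpha>"
  unfolding psi'_def by (auto intro: mult_nonpos_nonneg)

lemma psi_le_tangent: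
  assumes "\<alpha> \<le> 1" "0 \<le> x" "0 \<le> y"
  shows "psi x \<alpha> \<le> psi y \<alpha> + psi' y \<alpha> * ereal \<bar>x - y\<bar>"
proof (cases "psi' y \<alpha> = \<infinity>")
  case True
  \<comment> \<open>the slope term is \<infinity> unless x = y, where the ereal convention \<infinity> * 0 = 0 applies\<close>
  then show ?thesis
    by (cases "x = y") auto
next
  case False
  then obtain g where g: "psi' y \<alpha> = ereal g" "0 \<le> g"
    using psi'_nonneg[OF assms(3), of \<alpha>] by (cases "psi' y \<alpha>") auto
  have "psi x \<alpha> \<le> psi y \<alpha> + ereal (g * (x - y))"
  proof (cases "\<alpha> = 1")
    case True
    then show ?thesis using assms g by (simp add: psi_def psi'_def)
  next
    case False
    with assms g have "\<alpha> < 1" "0 < y"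
      by (auto simp: psi'_def split: if_splits)
    consider "0 < \<alpha>" | "\<alpha> = 0" "0 < x" | "\<alpha> < 0" "0 < x" | "\<alpha> \<le> 0" "x = 0"
      using assms by linarith
    then show ?thesis
    proof cases
      case 1
      then show ?thesis using powr_le_tangent[of \<alpha> x y] assms g \<open>\<alpha> < 1\<close> \<open>0 < y\<close>
        by (simp add: psi_def psi'_def)
    next
      case 2
      with g \<open>0 < y\<close> have "g = 1 / y"
        by (simp add: psi'_def)
      with 2 show ?thesis using ln_le_tangent[of x y] \<open>0 < y\<close>
        by (simp add: psi_def)
    next
      case 3
      with g \<open>0 < y\<close> have "g = - \<alpha> * y powr (\<alpha> - 1)"
        by (simp add: psi'_def)
      with 3 show ?thesis using powr_ge_tangent[of \<alpha> x y] \<open>0 < y\<close>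
        by (simp add: psi_def algebra_simps)
    next
      case 4
      then show ?thesis by (simp add: psi_def)
    qed
  qed
  also have "\<dots> \<le> psi y \<alpha> + psi' y \<alpha> * ereal \<bar>x - y\<bar>"
    using g by (intro add_left_mono) (simp add: mult_left_mono)
  finally show ?thesis .
qed

lemma sum_psi_le_tangent:
  assumes "finite X" "\<alpha> \<le> 1"
    and "\<And>i. i \<in> X \<Longrightarrow> 0 \<le> x i" "\<And>i. i \<in> X \<Longrightarrow> 0 \<le> y i"
    and "\<And>i. i \<in> X \<Longrightarrow> psi' (y i) \<alpha> \<le> B"
  shows "(\<Sum>i\<in>X. psi (x i) \<alpha>) \<le> (\<Sum>i\<in>X. psi (y i) \<alpha>) + B * ereal (\<Sum>i\<in>X. \<bar>x i - y i\<bar>)"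
proof -
  have "(\<Sum>i\<in>X. psi (x i) \<alpha>) \<le> (\<Sum>i\<in>X. psi (y i) \<alpha> + psi' (y i) \<alpha> * ereal \<bar>x i - y i\<bar>)"
    using assms by (intro sum_mono psi_le_tangent) auto
  also have "\<dots> \<le> (\<Sum>i\<in>X. psi (y i) \<alpha>) + (\<Sum>i\<in>X. B * ereal \<bar>x i - y i\<bar>)"
    unfolding sum.distrib using assms
    by (intro add_left_mono sum_mono ereal_mult_right_mono) auto
  also have "(\<Sum>i\<in>X. B * ereal \<bar>x i - y i\<bar>) = B * ereal (\<Sum>i\<in>X. \<bar>x i - y i\<bar>)"
    by (subst sum_ereal[symmetric], subst sum_ereal_right_distrib) auto
  finally show ?thesis .
qed

lemma welfare_le_tangent:
  assumes "0 \<le> lam" "lam \<le> 1" "\<alpha>\<^sub>1 \<le> 1" "\<alpha>\<^sub>2 \<le> 1"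
    and "\<And>i. i \<in> {1..m+q} \<Longrightarrow> 0 \<le> x i" "\<And>i. i \<in> {1..m+q} \<Longrightarrow> 0 \<le> y i"
    and "\<And>i. i \<in> users m \<Longrightarrow> psi' (y i) \<alpha>\<^sub>1 \<le> B"
    and "\<And>j. j \<in> items m q \<Longrightarrow> psi' (y j) \<alpha>\<^sub>2 \<le> B"
  shows "welfare m q lam \<alpha>\<^sub>1 \<alpha>\<^sub>2 x \<le> welfare m q lam \<alpha>\<^sub>1 \<alpha>\<^sub>2 y
    + B * ereal ((1 - lam) * (\<Sum>i\<in>users m. \<bar>x i - y i\<bar>) + lam * (\<Sum>j\<in>items m q. \<bar>x j - y j\<bar>))"
proof -
  let ?dU = "\<Sum>i\<in>users m. \<bar>x i - y i\<bar>" and ?dI = "\<Sum>j\<in>items m q. \<bar>x j - y j\<bar>"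
  have "welfare m q lam \<alpha>\<^sub>1 \<alpha>\<^sub>2 x
      \<le> ereal (1 - lam) * ((\<Sum>i\<in>users m. psi (y i) \<alpha>\<^sub>1) + B * ereal ?dU)
        + ereal lam * ((\<Sum>j\<in>items m q. psi (y j) \<alpha>\<^sub>2) + B * ereal ?dI)"
    unfolding welfare_def using assms
    by (intro add_mono ereal_mult_left_mono sum_psi_le_tangent) (auto simp: users_def items_def)
  also have "\<dots> = welfare m q lam \<alpha>\<^sub>1 \<alpha>\<^sub>2 y + (B * ereal ((1 - lam) * ?dU) + B * ereal (lam * ?dI))"
    using assms by (simp add: welfare_def ereal_pos_distrib ac_simps)
  also have "B * ereal ((1 - lam) * ?dU) + B * ereal (lam * ?dI) = B * ereal ((1 - lam) * ?dU + lam * ?dI)"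
    using assms by (simp add: sum_nonneg flip: ereal_right_distrib)
  finally show ?thesis .
qed

lemma ranking_tensors_outside:
  "P \<in> ranking_tensors m q \<Longrightarrow> i \<in> {1..m+q} \<Longrightarrow> j \<in> {1..m+q} \<Longrightarrow> k \<in> {1..q}
    \<Longrightarrow> \<not> (i \<in> users m \<and> j \<in> items m q) \<Longrightarrow> P i j k = 0"
  unfolding ranking_tensors_def by blast

lemma ranking_tensors_nonneg:
  "P \<in> ranking_tensors m q \<Longrightarrow> i \<in> users m \<Longrightarrow> j \<in> items m q \<Longrightarrow> k \<in> {1..q} \<Longrightarrow> 0 \<le> P i j k"
  unfolding ranking_tensors_def by blast

lemma ranking_tensors_row_sum:
  "P \<in> ranking_tensors m q \<Longrightarrow> i \<in> users m \<Longrightarrow> j \<in> items m q \<Longrightarrow> (\<Sum>k=1..q. P i j k) = 1"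
  unfolding ranking_tensors_def by blast

lemma ranking_tensors_column_sum:
  "P \<in> ranking_tensors m q \<Longrightarrow> i \<in> users m \<Longrightarrow> k \<in> {1..q} \<Longrightarrow> (\<Sum>j\<in>items m q. P i j k) = 1"
  unfolding ranking_tensors_def by blast

lemma Pv_eq_0:
  "P \<in> ranking_tensors m q \<Longrightarrow> i \<in> {1..m+q} \<Longrightarrow> j \<in> {1..m+q}
    \<Longrightarrow> \<not> (i \<in> users m \<and> j \<in> items m q) \<Longrightarrow> Pv q v P i j = 0"
  unfolding Pv_def by (simp add: ranking_tensors_outside)

lemma Pv_nonneg:
  assumes "P \<in> ranking_tensors m q" "\<And>k. k \<in> {1..q} \<Longrightarrow> 0 \<le> v k" "i \<in> {1..m+q}" "j \<in> {1..m+q}"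
  shows "0 \<le> Pv q v P i j"
proof (cases "i \<in> users m \<and> j \<in> items m q")
  case True
  then show ?thesis
    unfolding Pv_def using assms by (auto intro!: sum_nonneg simp: ranking_tensors_nonneg)
qed (use assms Pv_eq_0 in auto)

lemma util_user:
  assumes "P \<in> ranking_tensors m q" "i \<in> users m"
  shows "util m q mu v P i = (\<Sum>j\<in>items m q. mu i j * Pv q v P i j)"
  unfolding util_def using assms
  by (intro sum.mono_neutral_cong_right) (auto simp: Pv_eq_0 users_def items_def)

lemma util_nonneg:
  assumes "P \<in> ranking_tensors m q" "\<And>k. k \<in> {1..q} \<Longrightarrow> 0 \<le> v k"
    "\<And>i j. i \<in> {1..m+q} \<Longrightarrow> j \<in> {1..m+q} \<Longrightarrow> 0 \<le> mu i j" "i \<in> {1..m+q}"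
  shows "0 \<le> util m q mu v P i"
  unfolding util_def using assms
  by (intro sum_nonneg mult_nonneg_nonneg add_nonneg_nonneg Pv_nonneg) auto

lemma util_hat_nonneg:
  assumes "P \<in> ranking_tensors m q" "\<And>k. k \<in> {1..q} \<Longrightarrow> 0 \<le> v k"
    "\<And>i j. i \<in> {1..m+q} \<Longrightarrow> j \<in> {1..m+q} \<Longrightarrow> 0 \<le> mu i j"
    "\<And>i j. i \<in> users m \<Longrightarrow> j \<in> items m q \<Longrightarrow> 0 \<le> muhat i j" "i \<in> {1..m+q}"
  shows "0 \<le> util_hat m q muhat mu v P i"
proof (cases "i \<in> users m")
  case True
  then show ?thesis
    unfolding util_hat_def using assms
    by (auto intro!: sum_nonneg mult_nonneg_nonneg Pv_nonneg simp: users_def items_def)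
next
  case False
  then show ?thesis
    using util_nonneg[OF assms(1-3,5)] by (simp add: util_hat_def)
qed

lemma Pv_square_le:
  assumes "P \<in> ranking_tensors m q" "i \<in> users m" "j \<in> items m q"
  shows "(Pv q v P i j)\<^sup>2 \<le> (\<Sum>k=1..q. P i j k * (v k)\<^sup>2)"
proof -
  have nonneg: "0 \<le> P i j k" if "k \<in> {1..q}" for k
    using assms that by (rule ranking_tensors_nonneg)
  have "(Pv q v P i j)\<^sup>2 = (\<Sum>k=1..q. sqrt (P i j k) * (sqrt (P i j k) * v k))\<^sup>2"
    unfolding Pv_def using nonneg by (simp add: mult.assoc[symmetric])
  also have "\<dots> \<le> (\<Sum>k=1..q. (sqrt (P i j k))\<^sup>2) * (\<Sum>k=1..q. (sqrt (P i j k) * v k)\<^sup>2)"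
    by (rule Cauchy_Schwarz_ineq_sum)
  also have "\<dots> = (\<Sum>k=1..q. P i j k * (v k)\<^sup>2)"
    using nonneg ranking_tensors_row_sum[OF assms] by (simp add: power_mult_distrib)
  finally show ?thesis .
qed

lemma sum_Pv_square_le:
  assumes "P \<in> ranking_tensors m q"
  shows "(\<Sum>(i,j)\<in>users m \<times> items m q. (Pv q v P i j)\<^sup>2) \<le> real m * (\<Sum>k=1..q. (v k)\<^sup>2)"
proof -
  have "(\<Sum>(i,j)\<in>users m \<times> items m q. (Pv q v P i j)\<^sup>2)
      \<le> (\<Sum>i\<in>users m. \<Sum>j\<in>items m q. \<Sum>k=1..q. P i j k * (v k)\<^sup>2)"
    unfolding sum.cartesian_product[symmetric] using assms by (intro sum_mono Pv_square_le)
  also have "\<dots> = (\<Sum>i\<in>users m. \<Sum>k=1..q. (v k)\<^sup>2 * (\<Sum>j\<in>items m q. P i j k))"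
    by (simp add: sum.swap[of _ "items m q"] sum_distrib_left mult.commute)
  also have "\<dots> = real m * (\<Sum>k=1..q. (v k)\<^sup>2)"
    using assms by (simp add: ranking_tensors_column_sum users_def)
  finally show ?thesis .
qed

lemma sum_abs_util_diff_le:
  assumes P: "P \<in> ranking_tensors m q"
  shows "(\<Sum>i\<in>users m. \<bar>util m q mu v P i - util_hat m q muhat mu v P i\<bar>)
    \<le> sqrt (real m * (\<Sum>k=1..q. (v k)\<^sup>2))
      * sqrt (\<Sum>(i,j)\<in>users m \<times> items m q. (muhat i j - mu i j)\<^sup>2)"
proof -
  let ?UI = "users m \<times> items m q"
  let ?e = "\<lambda>(i,j). mu i j - muhat i j" and ?f = "\<lambda>(i,j). Pv q v P i j"
  have "(\<Sum>i\<in>users m. \<bar>util m q mu v P i - util_hat m q muhat mu v P i\<bar>)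
      = (\<Sum>i\<in>users m. \<bar>\<Sum>j\<in>items m q. ?e (i,j) * ?f (i,j)\<bar>)"
    using P by (intro sum.cong) (auto simp: util_user util_hat_def sum_subtractf[symmetric] left_diff_distrib)
  also have "\<dots> \<le> (\<Sum>(i,j)\<in>?UI. \<bar>?e (i,j)\<bar> * \<bar>?f (i,j)\<bar>)"
    unfolding sum.cartesian_product[symmetric] by (intro sum_mono order_trans[OF sum_abs]) (simp add: abs_mult)
  also have "\<dots> \<le> L2_set ?e ?UI * L2_set ?f ?UI"
    using L2_set_mult_ineq[of ?e ?f ?UI] by (simp add: case_prod_beta)
  also have "\<dots> \<le> L2_set ?e ?UI * sqrt (real m * (\<Sum>k=1..q. (v k)\<^sup>2))"
    using sum_Pv_square_le[OF P, of v] unfolding L2_set_def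
    by (intro mult_left_mono real_sqrt_le_mono) (auto simp: case_prod_beta sum_nonneg)
  also have "L2_set ?e ?UI = sqrt (\<Sum>(i,j)\<in>?UI. (muhat i j - mu i j)\<^sup>2)"
    unfolding L2_set_def by (simp add: case_prod_beta power2_commute)
  finally show ?thesis
    by (simp only: mult.commute)
qed

lemma welfare_half_le_of_eq_on_items:
  assumes "\<alpha> \<le> 1" "0 \<le> B"
    and "\<And>i. i \<in> {1..m+q} \<Longrightarrow> 0 \<le> x i" "\<And>i. i \<in> {1..m+q} \<Longrightarrow> 0 \<le> y i"
    and "\<And>i. i \<in> {1..m+q} \<Longrightarrow> psi' (y i) \<alpha> \<le> B"
    and "\<And>j. j \<in> items m q \<Longrightarrow> x j = y j"
    and "(\<Sum>i\<in>users m. \<bar>x i - y i\<bar>) \<le> D"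
  shows "welfare m q (1/2) \<alpha> \<alpha> x \<le> welfare m q (1/2) \<alpha> \<alpha> y + B * ereal (D / 2)"
proof -
  have "welfare m q (1/2) \<alpha> \<alpha> x
      \<le> welfare m q (1/2) \<alpha> \<alpha> y + B * ereal ((1 - 1/2) * (\<Sum>i\<in>users m. \<bar>x i - y i\<bar>)
          + 1/2 * (\<Sum>j\<in>items m q. \<bar>x j - y j\<bar>))"
    using assms by (intro welfare_le_tangent) (auto simp: users_def items_def)
  also have "\<dots> \<le> welfare m q (1/2) \<alpha> \<alpha> y + B * ereal (D / 2)"
    using assms by (intro add_left_mono ereal_mult_left_mono) auto
  finally show ?thesis .
qed

lemma welfare_half_util_util_hat_le:
  fixes D :: real
  assumes P: "P \<in> ranking_tensors m q" and "\<alpha> \<le> 1" "0 \<le> B"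
    and "\<And>k. k \<in> {1..q} \<Longrightarrow> 0 \<le> v k"
    and "\<And>i j. i \<in> {1..m+q} \<Longrightarrow> j \<in> {1..m+q} \<Longrightarrow> 0 \<le> mu i j"
    and "\<And>i j. i \<in> users m \<Longrightarrow> j \<in> items m q \<Longrightarrow> 0 \<le> muhat i j"
  defines "D \<equiv> sqrt (real (m+q) * (\<Sum>k=1..q. (v k)\<^sup>2))
      * sqrt (\<Sum>(i,j)\<in>users m \<times> items m q. (muhat i j - mu i j)\<^sup>2)"
  shows "(\<And>i. i \<in> {1..m+q} \<Longrightarrow> psi' (util_hat m q muhat mu v P i) \<alpha> \<le> B) \<Longrightarrow>
      welfare m q (1/2) \<alpha> \<alpha> (util m q mu v P)
        \<le> welfare m q (1/2) \<alpha> \<alpha> (util_hat m q muhat mu v P) + B * ereal (D / 2)"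
    and "(\<And>i. i \<in> {1..m+q} \<Longrightarrow> psi' (util m q mu v P i) \<alpha> \<le> B) \<Longrightarrow>
      welfare m q (1/2) \<alpha> \<alpha> (util_hat m q muhat mu v P)
        \<le> welfare m q (1/2) \<alpha> \<alpha> (util m q mu v P) + B * ereal (D / 2)"
proof -
  have "sqrt (real m * (\<Sum>k=1..q. (v k)\<^sup>2)) \<le> sqrt (real (m+q) * (\<Sum>k=1..q. (v k)\<^sup>2))"
    by (intro real_sqrt_le_mono mult_right_mono sum_nonneg) auto
  then have dist: "(\<Sum>i\<in>users m. \<bar>util m q mu v P i - util_hat m q muhat mu v P i\<bar>) \<le> D"
    unfolding D_def
    by (intro order_trans[OF sum_abs_util_diff_le[OF P] mult_right_mono] real_sqrt_ge_zero sum_nonneg)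
      (auto simp: case_prod_beta)
  have items: "util_hat m q muhat mu v P j = util m q mu v P j" if "j \<in> items m q" for j
    using that by (auto simp: util_hat_def users_def items_def)
  note nonneg = util_nonneg[OF assms(1,4,5)] util_hat_nonneg[OF assms(1,4-6)]
  show "welfare m q (1/2) \<alpha> \<alpha> (util m q mu v P)
      \<le> welfare m q (1/2) \<alpha> \<alpha> (util_hat m q muhat mu v P) + B * ereal (D / 2)"
    if "\<And>i. i \<in> {1..m+q} \<Longrightarrow> psi' (util_hat m q muhat mu v P i) \<alpha> \<le> B"
    using assms(2,3) nonneg that items dist by (intro welfare_half_le_of_eq_on_items) auto
  show "welfare m q (1/2) \<alpha> \<alpha> (util_hat m q muhat mu v P)
      \<le> welfare m q (1/2) \<alpha> \<alpha> (util m q mu v P) + B * ereal (D / 2)"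
    if "\<And>i. i \<in> {1..m+q} \<Longrightarrow> psi' (util m q mu v P i) \<alpha> \<le> B"
    using assms(2,3) nonneg that items dist
    by (intro welfare_half_le_of_eq_on_items) (auto simp: abs_minus_commute)
qed

theorem mainTheorem11:
  fixes m q :: nat and v :: "nat \<Rightarrow> real" and mu muhat :: "nat \<Rightarrow> nat \<Rightarrow> real"
    and \<alpha> :: real and Phat Pstar :: "nat \<Rightarrow> nat \<Rightarrow> nat \<Rightarrow> real"
  assumes v_mono: "\<And>k l. 1 \<le> k \<Longrightarrow> k \<le> l \<Longrightarrow> l \<le> q \<Longrightarrow> v l \<le> v k"
    and v_nonneg: "\<And>k. k \<in> {1..q} \<Longrightarrow> 0 \<le> v k"
    and mu_nonneg: "\<And>i j. i \<in> {1..m+q} \<Longrightarrow> j \<in> {1..m+q} \<Longrightarrow> 0 \<le> mu i j"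
    and muhat_nonneg: "\<And>i j. i \<in> users m \<Longrightarrow> j \<in> items m q \<Longrightarrow> 0 \<le> muhat i j"
    and alpha_le: "\<alpha> \<le> 1"
    and Phat: "Phat \<in> ranking_tensors m q"
    and Phat_max: "\<And>P. P \<in> ranking_tensors m q \<Longrightarrow>
        welfare m q (1/2) \<alpha> \<alpha> (util_hat m q muhat mu v P)
          \<le> welfare m q (1/2) \<alpha> \<alpha> (util_hat m q muhat mu v Phat)"
    and Pstar: "Pstar \<in> ranking_tensors m q"
    and Pstar_max: "\<And>P. P \<in> ranking_tensors m q \<Longrightarrow>
        welfare m q (1/2) \<alpha> \<alpha> (util m q mu v P)
          \<le> welfare m q (1/2) \<alpha> \<alpha> (util m q mu v Pstar)"
  shows "welfare m q (1/2) \<alpha> \<alpha> (util m q mu v Pstar)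
    \<le> welfare m q (1/2) \<alpha> \<alpha> (util m q mu v Phat)
       + ereal 4
         * max (SUP i\<in>{1..m+q}. psi' (util m q mu v Phat i) \<alpha>)
               (SUP i\<in>{1..m+q}. psi' (util_hat m q muhat mu v Pstar i) \<alpha>)
         * ereal (sqrt (real (m+q) * (\<Sum>k=1..q. (v k)^2)))
         * ereal (sqrt (\<Sum>(i,j)\<in>users m \<times> items m q. (muhat i j - mu i j)^2))"
proof (cases "m + q = 0")
  case True
  then show ?thesis
    by (simp add: welfare_def users_def items_def flip: zero_ereal_def)
next
  case False
  let ?W = "welfare m q (1/2) \<alpha> \<alpha>"
  define B where "B = max (SUP i\<in>{1..m+q}. psi' (util m q mu v Phat i) \<alpha>)
    (SUP i\<in>{1..m+q}. psi' (util_hat m q muhat mu v Pstar i) \<alpha>)"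
  define V where "V = sqrt (real (m+q) * (\<Sum>k=1..q. (v k)^2))"
  define E where "E = sqrt (\<Sum>(i,j)\<in>users m \<times> items m q. (muhat i j - mu i j)^2)"
  have B_bounds: "psi' (util m q mu v Phat i) \<alpha> \<le> B" "psi' (util_hat m q muhat mu v Pstar i) \<alpha> \<le> B"
    if "i \<in> {1..m+q}" for i
    using that unfolding B_def by (metis SUP_upper max.coboundedI1 max.coboundedI2)+
  have one: "1 \<in> {1..m+q}"
    using False by auto
  have "0 \<le> B"
    using psi'_nonneg[OF util_nonneg[OF Phat v_nonneg mu_nonneg one]] B_bounds(1)[OF one]
    by (rule order_trans)
  have "0 \<le> V * E"
    unfolding V_def E_def by (intro mult_nonneg_nonneg real_sqrt_ge_zero sum_nonneg) auto
  note gap = welfare_half_util_util_hat_le[OF _ alpha_le \<open>0 \<le> B\<close> v_nonneg mu_nonneg muhat_nonneg]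
  have "?W (util m q mu v Pstar) \<le> ?W (util_hat m q muhat mu v Pstar) + B * ereal (V * E / 2)"
    unfolding V_def E_def using B_bounds by (intro gap(1)[OF Pstar]) auto
  also have "\<dots> \<le> ?W (util_hat m q muhat mu v Phat) + B * ereal (V * E / 2)"
    using Phat_max[OF Pstar] by (rule add_right_mono)
  also have "\<dots> \<le> ?W (util m q mu v Phat) + B * ereal (V * E / 2) + B * ereal (V * E / 2)"
    unfolding V_def E_def using B_bounds by (intro add_right_mono gap(2)[OF Phat]) auto
  also have "\<dots> = ?W (util m q mu v Phat) + B * ereal (V * E)"
    using \<open>0 \<le> V * E\<close> by (simp add: add.assoc mult.commute flip: ereal_right_distrib)
  also have "\<dots> \<le> ?W (util m q mu v Phat) + B * ereal (4 * V * E)"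
    using \<open>0 \<le> B\<close> \<open>0 \<le> V * E\<close> by (intro add_left_mono ereal_mult_left_mono) (auto simp: mult.commute)
  also have "\<dots> = ?W (util m q mu v Phat) + ereal 4 * B * ereal V * ereal E"
    by (simp add: mult_ac)
  finally show ?thesis
    unfolding B_def V_def E_def .
qed

end
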